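(* The relay rules in $\mathcal{IFR}$ emulate each of the process rules Introduction, Delegation, Fusion, and Reversal; that is, for each of these process rules $p$, for every simple relay graph $G_R$ and every possible application of $p$ to $\mathrm{CPG}(G_R)$ yielding a process graph $G_P'$, there is a simple relay graph $G_R'$ with $\mathrm{CPG}(G_R')=G_P'$ (up to isomorphism) that can be obtained from $G_R$ by applying rules from $\mathcal{IFR}$ only.
   Context: Relay model. There is a set $P$ of processes. Each process owns a set of relays. Every relay $r$ has exactly one outgoing connection: either $r$ is a sink relay (its messages are delivered to its owning process) or it points to another relay; following outgoing connections never cycles and ends at a unique sink relay, whose owner is the sink process of $r$. A process $u$ "has a relay $r$ to" $v$ if $u$ owns $r$ (or will upon receipt of a message in transit) and $v$ is the sink process of $r$. A relay is direct if it is a sink or points to a sink relay. $\mathrm{incoming}(r)$ is the number of connections into $r$; $\mathrm{same\text{-}target}(r,r')$ holds iff $r,r'$ have the same outgoing target. A process may create new sink relays at any time. When $u$ sends a relay $s$ it owns via a relay $r$ it owns, upon receipt the sink process of $r$ obtains a new relay whose outgoing connection points to $s$. Deleting a relay removes it; merging relays with the same target and no incoming connections replaces them by one relay with that target. Relay graph: directed graph on $P\cup R$ with explicit edges (process $\to$ owned relay, relay $\to$ its outgoing target relay, sink relay $\to$ owning process) and implicit edges (relay $r\to$ relay $w$ if a message in $r$'s buffer contains a reference to $w$). A simple relay graph is a relay graph in which all edges are explicit, all relays are direct, and every sink relay has exactly one incoming connection. Its corresponding process graph $\mathrm{CPG}(G)$ is the multigraph on $P$ containing an edge $(u,v)$ for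 every edge $(u',v')$ of $G$ between relays $u',v'$ with $u'$ owned by $u$ and $v'$ owned by $v$. Rules $\mathcal{IFR}$: (Relay Introduction) if $u$ has a relay $r$ to $v$ and a relay $s$ to $w$, $u$ may send $s$ to $v$ via $r$. (Relay Fusion) if $u$ has relays $r,r'$ with $\mathrm{same\text{-}target}(r,r')$, $u$ may merge them. (Relay Reversal) if $u$ has relays $r\neq s$ with $\mathrm{incoming}(r)=0$, $u$ may send $s$ via $r$ and then delete $r$. Process rules (on a directed multigraph of processes, where an edge $(u,v)$ means $u$ holds a reference of $v$): Introduction: if $u$ has references of $v$ and $w$ with $v\neq w$, $u$ sends $v$ a reference of $w$ and keeps it (adds edge $(v,w)$). Delegation: if $u$ has references of $v$ and $w$ with $u,v,w$ pairwise distinct, $u$ sends $v$ a reference of $w$ and deletes its reference of $w$ (adds $(v,w)$, removes $(u,w)$). Fusion: if $u$ has two references of the same process, it keeps only one. Reversal: if $u$ has a reference of $v\neq u$, it sends a reference of itself to $v$ and deletes its reference of $v$. *)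

theory Defs
  imports Main "HOL-Library.Multiset"
begin

text \<open>Processes have type 'p (the process set is a set P of that type); relays are
  identified by natural numbers (an unbounded supply of fresh relay names).
  A relay state records the existing relays, their owners, their outgoing connection
  (None = sink relay, whose messages are delivered to its owner; Some t = points to
  relay t) and the buffer of messages in transit at each relay.  A message is a
  reference to a relay (the relay being sent).\<close>

record 'p rstate =
  rels :: "nat set"
  own  :: "nat \<Rightarrow> 'p"
  tgt  :: "nat \<Rightarrow> nat option"
  buf  :: "nat \<Rightarrow> nat multiset"

definition conn :: "'p rstate \<Rightarrow> (nat \<times> nat) set" where
  "conn G = {(r, t). r \<in> rels G \<and> tgt G r = Some t}"

definition wf_rstate :: "'p set \<Rightarrow> 'p rstate \<Rightarrow> bool" where
  "wf_rstate P G \<longleftrightarrow>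
     finite (rels G) \<and>
     (\<forall>r \<in> rels G. own G r \<in> P) \<and>
     (\<forall>r \<in> rels G. \<forall>t. tgt G r = Some t \<longrightarrow> t \<in> rels G) \<and>
     (\<forall>r \<in> rels G. set_mset (buf G r) \<subseteq> rels G) \<and>
     acyclic (conn G)"

inductive reaches_sink :: "'p rstate \<Rightarrow> nat \<Rightarrow> nat \<Rightarrow> bool" for G where
  sink: "r \<in> rels G \<Longrightarrow> tgt G r = None \<Longrightarrow> reaches_sink G r r"
| step: "r \<in> rels G \<Longrightarrow> tgt G r = Some t \<Longrightarrow> reaches_sink G t s \<Longrightarrow> reaches_sink G r s"

definition sink_process :: "'p rstate \<Rightarrow> nat \<Rightarrow> 'p \<Rightarrow> bool" where
  "sink_process G r v \<longleftrightarrow> (\<exists>s. reaches_sink G r s \<and> own G s = v)"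

definition has_relay :: "'p rstate \<Rightarrow> 'p \<Rightarrow> nat \<Rightarrow> 'p \<Rightarrow> bool" where
  "has_relay G u r v \<longleftrightarrow> r \<in> rels G \<and> own G r = u \<and> sink_process G r v"

definition is_sink :: "'p rstate \<Rightarrow> nat \<Rightarrow> bool" where
  "is_sink G r \<longleftrightarrow> tgt G r = None"

definition direct :: "'p rstate \<Rightarrow> nat \<Rightarrow> bool" where
  "direct G r \<longleftrightarrow> (case tgt G r of None \<Rightarrow> True | Some t \<Rightarrow> is_sink G t)"

text \<open>Explicit connections (relays whose
  outgoing connection is r) plus pending references to r in message buffers (implicit
  edges); in a simple relay graph the latter are absent.\<close>
definition incoming :: "'p rstate \<Rightarrow> nat \<Rightarrow> nat" where
  "incoming G r = card {x \<in> rels G. tgt G x = Some r} + (\<Sum>x \<in> rels G. count (buf G x) r)"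

definition same_target :: "'p rstate \<Rightarrow> nat \<Rightarrow> nat \<Rightarrow> bool" where
  "same_target G r r' \<longleftrightarrow> tgt G r = tgt G r'"

definition simple_rg :: "'p set \<Rightarrow> 'p rstate \<Rightarrow> bool" where
  "simple_rg P G \<longleftrightarrow>
     wf_rstate P G \<and>
     (\<forall>r \<in> rels G. buf G r = {#}) \<and>
     (\<forall>r \<in> rels G. direct G r) \<and>
     (\<forall>r \<in> rels G. is_sink G r \<longrightarrow> incoming G r = 1)"

definition CPG :: "'p rstate \<Rightarrow> ('p \<times> 'p) multiset" where
  "CPG G = image_mset (\<lambda>r. (own G r, own G (the (tgt G r))))
                      (mset_set {r \<in> rels G. tgt G r \<noteq> None})"

definition add_relay :: "'p rstate \<Rightarrow> nat \<Rightarrow> 'p \<Rightarrow> nat option \<Rightarrow> 'p rstate" where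
  "add_relay G n u c =
     G\<lparr>rels := insert n (rels G), own := (own G)(n := u), tgt := (tgt G)(n := c),
       buf := (buf G)(n := {#})\<rparr>"

definition enqueue :: "'p rstate \<Rightarrow> nat \<Rightarrow> nat \<Rightarrow> 'p rstate" where
  "enqueue G r m = G\<lparr>buf := (buf G)(r := buf G r + {#m#})\<rparr>"

definition delete_relay :: "'p rstate \<Rightarrow> nat \<Rightarrow> 'p rstate" where
  "delete_relay G r =
     (case tgt G r of
        None \<Rightarrow> G\<lparr>rels := rels G - {r}\<rparr>
      | Some t \<Rightarrow> G\<lparr>rels := rels G - {r}, buf := (buf G)(t := buf G t + buf G r)\<rparr>)"

definition merge_relays :: "'p rstate \<Rightarrow> nat \<Rightarrow> nat \<Rightarrow> 'p rstate" where
  "merge_relays G r r' =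
     G\<lparr>rels := rels G - {r'}, buf := (buf G)(r := buf G r + buf G r')\<rparr>"

text \<open>One step: a rule of IFR applied by a process, or a basic step of the relay
  model (creating a sink relay, forwarding a message in transit, receiving a message).\<close>
inductive ifr_step :: "'p set \<Rightarrow> 'p rstate \<Rightarrow> 'p rstate \<Rightarrow> bool" for P where
  create_sink:
    "u \<in> P \<Longrightarrow> n \<notin> rels G \<Longrightarrow> ifr_step P G (add_relay G n u None)"
| relay_introduction:
    "has_relay G u r v \<Longrightarrow> has_relay G u s w \<Longrightarrow> ifr_step P G (enqueue G r s)"
| relay_fusion:
    "r \<in> rels G \<Longrightarrow> r' \<in> rels G \<Longrightarrow> r \<noteq> r' \<Longrightarrow> own G r = u \<Longrightarrow> own G r' = u \<Longrightarrow>
     same_target G r r' \<Longrightarrow> incoming G r = 0 \<Longrightarrow> incoming G r' = 0 \<Longrightarrow>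
     ifr_step P G (merge_relays G r r')"
| relay_reversal:
    "r \<in> rels G \<Longrightarrow> s \<in> rels G \<Longrightarrow> r \<noteq> s \<Longrightarrow> own G r = u \<Longrightarrow> own G s = u \<Longrightarrow>
     incoming G r = 0 \<Longrightarrow> ifr_step P G (delete_relay (enqueue G r s) r)"
| forward:
    "r \<in> rels G \<Longrightarrow> tgt G r = Some t \<Longrightarrow> m \<in># buf G r \<Longrightarrow>
     ifr_step P G (G\<lparr>buf := (buf G)(r := buf G r - {#m#}, t := buf G t + {#m#})\<rparr>)"
| receive:
    "r \<in> rels G \<Longrightarrow> tgt G r = None \<Longrightarrow> m \<in># buf G r \<Longrightarrow> n \<notin> rels G \<Longrightarrow>
     ifr_step P G (add_relay (G\<lparr>buf := (buf G)(r := buf G r - {#m#})\<rparr>) n (own G r) (Some m))"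

datatype prule = Introduction | Delegation | Fusion | Reversal

text \<open>Process graphs are multisets of directed edges; (u,v) means u holds a reference of v.\<close>
fun proc_step :: "prule \<Rightarrow> ('p \<times> 'p) multiset \<Rightarrow> ('p \<times> 'p) multiset \<Rightarrow> bool" where
  "proc_step Introduction M M' \<longleftrightarrow>
     (\<exists>u v w. (u, v) \<in># M \<and> (u, w) \<in># M \<and> v \<noteq> w \<and> M' = M + {#(v, w)#})"
| "proc_step Delegation M M' \<longleftrightarrow>
     (\<exists>u v w. (u, v) \<in># M \<and> (u, w) \<in># M \<and> u \<noteq> v \<and> v \<noteq> w \<and> u \<noteq> w \<and>
        M' = M - {#(u, w)#} + {#(v, w)#})"
| "proc_step Fusion M M' \<longleftrightarrow>
     (\<exists>u v. count M (u, v) \<ge> 2 \<and> M' = M - {#(u, v)#})"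
| "proc_step Reversal M M' \<longleftrightarrow>
     (\<exists>u v. (u, v) \<in># M \<and> v \<noteq> u \<and> M' = M - {#(u, v)#} + {#(v, u)#})"

end

theory Submission
  imports Defs
begin

text \<open>A simple relay graph is a disjoint union of links r \<rightarrow> t, a non-sink relay r pointing to a
  sink t, and each link contributes the edge (owner of r, owner of t) to the process graph.
  So it suffices to remove, reverse and add single links by IFR steps, ending again in a
  simple relay graph.

  A link r \<rightarrow> t from u to v is removed by two Relay Reversals: u sends some other relay via
  r and deletes r, then v sends some other relay via t, now without incoming connections,
  and deletes it.  It is reversed by u creating a fresh sink n and sending it via r with
  Relay Reversal; on receipt v owns a relay n' \<rightarrow> n to u and disposes of t in the same way.
  Given links from u to v and to w, a link from v to w is added by u introducing its relay to
  v to w; w thereby obtains a relay b \<rightarrow> r1 to v, creates a fresh sink y and sends it via b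
  with Relay Reversal, so that v ends up with a direct relay x \<rightarrow> y.
  Delegation is Introduction followed by a removal, and Fusion is a removal of one of two
  parallel links.\<close>

section \<open>Simple relay graphs as sets of links\<close>

lemma simple_rg_iff:
  "simple_rg P G \<longleftrightarrow>
     finite (rels G) \<and>
     (\<forall>r \<in> rels G. own G r \<in> P \<and> buf G r = {#} \<and>
        (\<forall>t. tgt G r = Some t \<longrightarrow> t \<in> rels G \<and> tgt G t = None)) \<and>
     (\<forall>t \<in> rels G. tgt G t = None \<longrightarrow> card {r \<in> rels G. tgt G r = Some t} = 1)"
  (is "_ \<longleftrightarrow> ?fin \<and> ?rel \<and> ?sink")
proof -
  have direct: "(\<forall>r \<in> rels G. direct G r) \<longleftrightarrow>
      (\<forall>r \<in> rels G. \<forall>t. tgt G r = Some t \<longrightarrow> tgt G t = None)"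
    by (auto simp: direct_def is_sink_def split: option.splits)
  have incoming: "incoming G t = card {r \<in> rels G. tgt G r = Some t}"
    if "\<forall>r \<in> rels G. buf G r = {#}" for t
    using that by (simp add: incoming_def)
  have acyclic: "acyclic (conn G)" if ?rel
  proof -
    have "tgt G y = None" if "(x, y) \<in> conn G" for x y
      using that \<open>?rel\<close> unfolding conn_def by blast
    then have "trans (conn G)" and "(x, x) \<notin> conn G" for x
      unfolding trans_def by (fastforce simp: conn_def)+
    then show ?thesis
      by (simp add: acyclic_def trancl_id)
  qed
  show ?thesis
  proof
    assume "simple_rg P G"
    then have "wf_rstate P G" "\<forall>r \<in> rels G. buf G r = {#}" "\<forall>r \<in> rels G. direct G r"
      "\<forall>r \<in> rels G. is_sink G r \<longrightarrow> incoming G r = 1"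
      by (simp_all add: simple_rg_def)
    then show "?fin \<and> ?rel \<and> ?sink"
      unfolding wf_rstate_def direct is_sink_def incoming[OF \<open>\<forall>r \<in> rels G. buf G r = {#}\<close>]
      by blast
  next
    assume G: "?fin \<and> ?rel \<and> ?sink"
    then have buf: "\<forall>r \<in> rels G. buf G r = {#}"
      by blast
    then have "\<forall>r \<in> rels G. set_mset (buf G r) \<subseteq> rels G"
      by simp
    with G buf acyclic show "simple_rg P G"
      unfolding simple_rg_def wf_rstate_def direct is_sink_def incoming[OF buf]
      by blast
  qed
qed

lemma
  assumes "simple_rg P G"
  shows simple_rg_finite: "finite (rels G)"
    and simple_rg_own: "r \<in> rels G \<Longrightarrow> own G r \<in> P"
    and simple_rg_buf: "r \<in> rels G \<Longrightarrow> buf G r = {#}"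
    and simple_rg_tgt: "r \<in> rels G \<Longrightarrow> tgt G r = Some t \<Longrightarrow> t \<in> rels G \<and> tgt G t = None"
    and simple_rg_sink_card:
      "t \<in> rels G \<Longrightarrow> tgt G t = None \<Longrightarrow> card {r \<in> rels G. tgt G r = Some t} = 1"
  using assms unfolding simple_rg_iff by blast+

lemma simple_rgI:
  assumes "finite (rels G)" "\<And>r. r \<in> rels G \<Longrightarrow> own G r \<in> P"
    "\<And>r. r \<in> rels G \<Longrightarrow> buf G r = {#}"
    "\<And>r t. r \<in> rels G \<Longrightarrow> tgt G r = Some t \<Longrightarrow> t \<in> rels G \<and> tgt G t = None"
    "\<And>t. t \<in> rels G \<Longrightarrow> tgt G t = None \<Longrightarrow> card {r \<in> rels G. tgt G r = Some t} = 1"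
  shows "simple_rg P G"
  using assms unfolding simple_rg_iff by blast

lemma simple_rg_tgt_unique:
  assumes "simple_rg P G" "r \<in> rels G" "r' \<in> rels G" "tgt G r = Some t" "tgt G r' = Some t"
  shows "r = r'"
proof -
  have "card {x \<in> rels G. tgt G x = Some t} = 1"
    using assms simple_rg_sink_card simple_rg_tgt by blast
  then obtain x where "{x \<in> rels G. tgt G x = Some t} = {x}"
    by (rule card_1_singletonE)
  then show ?thesis
    using assms(2-) by (metis (mono_tags, lifting) mem_Collect_eq singletonD)
qed

text \<open>IFR steps leave stale owners, targets and buffers behind at deleted relays, so the
  states they reach are compared with the intended ones on the live relays only.\<close>

definition rstate_equiv :: "'p rstate \<Rightarrow> 'p rstate \<Rightarrow> bool" (infix "\<simeq>" 50) where
  "G \<simeq> H \<longleftrightarrow> rels G = rels H \<and>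
     (\<forall>r \<in> rels G. own G r = own H r \<and> tgt G r = tgt H r \<and> buf G r = buf H r)"

lemma simple_rg_equiv:
  assumes H: "simple_rg P H" and "G \<simeq> H"
  shows "simple_rg P G"
proof -
  have rels: "rels G = rels H"
    and fields: "\<And>r. r \<in> rels H \<Longrightarrow> own G r = own H r"
      "\<And>r. r \<in> rels H \<Longrightarrow> tgt G r = tgt H r" "\<And>r. r \<in> rels H \<Longrightarrow> buf G r = buf H r"
    using assms(2) by (auto simp: rstate_equiv_def)
  show ?thesis
  proof (rule simple_rgI)
    show "finite (rels G)"
      using simple_rg_finite[OF H] rels by simp
    show "own G r \<in> P" "buf G r = {#}" if "r \<in> rels G" for r
      using that simple_rg_own[OF H] simple_rg_buf[OF H] fields rels by simp_all
    show "t \<in> rels G \<and> tgt G t = None" if "r \<in> rels G" "tgt G r = Some t" for r t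
      using that simple_rg_tgt[OF H, of r t] fields(2) rels by simp
    show "card {r \<in> rels G. tgt G r = Some t} = 1" if "t \<in> rels G" "tgt G t = None" for t
    proof -
      have "{r \<in> rels G. tgt G r = Some t} = {r \<in> rels H. tgt H r = Some t}"
        using rels fields(2) by auto
      moreover have "tgt H t = None"
        using that fields(2) rels by simp
      ultimately show ?thesis
        using simple_rg_sink_card[OF H] that(1) rels by simp
    qed
  qed
qed

lemma CPG_equiv:
  assumes "simple_rg P H" "G \<simeq> H"
  shows "CPG G = CPG H"
proof -
  have nonsinks: "{r \<in> rels G. tgt G r \<noteq> None} = {r \<in> rels H. tgt H r \<noteq> None}"
    using assms(2) by (auto simp: rstate_equiv_def)
  have "own G r = own H r \<and> own G (the (tgt G r)) = own H (the (tgt H r))"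
    if "r \<in> rels H" "tgt H r \<noteq> None" for r
    using that assms(2) simple_rg_tgt[OF assms(1) that(1)] by (auto simp: rstate_equiv_def)
  moreover have "finite {r \<in> rels H. tgt H r \<noteq> None}"
    using simple_rg_finite[OF assms(1)] by simp
  ultimately show ?thesis
    unfolding CPG_def nonsinks by (intro image_mset_cong) auto
qed

definition remove_link :: "'p rstate \<Rightarrow> nat \<Rightarrow> nat \<Rightarrow> 'p rstate" where
  "remove_link G r t = G\<lparr>rels := rels G - {r, t}\<rparr>"

definition insert_link :: "'p rstate \<Rightarrow> nat \<Rightarrow> 'p \<Rightarrow> nat \<Rightarrow> 'p \<Rightarrow> 'p rstate" where
  "insert_link G r u t v =
     G\<lparr>rels := insert r (insert t (rels G)), own := (own G)(r := u, t := v),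
       tgt := (tgt G)(r := Some t, t := None), buf := (buf G)(r := {#}, t := {#})\<rparr>"

lemma remove_link_simps [simp]:
  "rels (remove_link G r t) = rels G - {r, t}"
  "own (remove_link G r t) = own G"
  "tgt (remove_link G r t) = tgt G"
  "buf (remove_link G r t) = buf G"
  by (simp_all add: remove_link_def)

lemma insert_link_simps [simp]:
  "rels (insert_link G r u t v) = insert r (insert t (rels G))"
  "own (insert_link G r u t v) = (own G)(r := u, t := v)"
  "tgt (insert_link G r u t v) = (tgt G)(r := Some t, t := None)"
  "buf (insert_link G r u t v) = (buf G)(r := {#}, t := {#})"
  by (simp_all add: insert_link_def)

lemma simple_rg_remove_link:
  assumes G: "simple_rg P G" and r: "r \<in> rels G" "tgt G r = Some t"
  shows "simple_rg P (remove_link G r t)"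
proof (rule simple_rgI)
  have t: "t \<in> rels G" "tgt G t = None"
    using simple_rg_tgt[OF G r] by auto
  show "finite (rels (remove_link G r t))"
    using simple_rg_finite[OF G] by simp
  show "own (remove_link G r t) x \<in> P" "buf (remove_link G r t) x = {#}"
    if "x \<in> rels (remove_link G r t)" for x
    using that simple_rg_own[OF G] simple_rg_buf[OF G] by simp_all
  show "s \<in> rels (remove_link G r t) \<and> tgt (remove_link G r t) s = None"
    if "x \<in> rels (remove_link G r t)" "tgt (remove_link G r t) x = Some s" for x s
  proof -
    have x: "x \<in> rels G" "x \<noteq> r" "tgt G x = Some s"
      using that by auto
    have s: "s \<in> rels G" "tgt G s = None"
      using simple_rg_tgt[OF G x(1,3)] by auto
    have "s \<noteq> t"
      using simple_rg_tgt_unique[OF G x(1) r(1)] x r(2) by auto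
    moreover have "s \<noteq> r"
      using s r(2) by auto
    ultimately show ?thesis
      using s by simp
  qed
  show "card {x \<in> rels (remove_link G r t). tgt (remove_link G r t) x = Some s} = 1"
    if "s \<in> rels (remove_link G r t)" "tgt (remove_link G r t) s = None" for s
  proof -
    have "{x \<in> rels G - {r, t}. tgt G x = Some s} = {x \<in> rels G. tgt G x = Some s}"
      using that r t by auto
    then show ?thesis
      using simple_rg_sink_card[OF G] that by simp
  qed
qed

lemma CPG_remove_link:
  assumes G: "simple_rg P G" and r: "r \<in> rels G" "tgt G r = Some t"
  shows "CPG (remove_link G r t) = CPG G - {#(own G r, own G t)#}"
proof -
  let ?N = "{x \<in> rels G. tgt G x \<noteq> None}"
  have "tgt G t = None"
    using simple_rg_tgt[OF G r] by auto
  then have "{x \<in> rels (remove_link G r t). tgt G x \<noteq> None} = ?N - {r}"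
    by auto
  moreover have "finite ?N" "{#r#} \<subseteq># mset_set ?N"
    using simple_rg_finite[OF G] r by auto
  ultimately show ?thesis
    using r by (simp add: CPG_def mset_set_Diff image_mset_Diff)
qed

lemma simple_rg_insert_link:
  assumes G: "simple_rg P G" and fresh: "r \<notin> rels G" "t \<notin> rels G" "r \<noteq> t"
    and "u \<in> P" "v \<in> P"
  shows "simple_rg P (insert_link G r u t v)"
proof (rule simple_rgI)
  have tgt_fresh: "tgt G x \<noteq> Some s" if "x \<in> rels G" "s \<notin> rels G" for x s
    using that simple_rg_tgt[OF G] by blast
  show "finite (rels (insert_link G r u t v))"
    using simple_rg_finite[OF G] by simp
  show "own (insert_link G r u t v) x \<in> P" "buf (insert_link G r u t v) x = {#}"
    if "x \<in> rels (insert_link G r u t v)" for x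
    using that assms simple_rg_own[OF G] simple_rg_buf[OF G] by auto
  show "s \<in> rels (insert_link G r u t v) \<and> tgt (insert_link G r u t v) s = None"
    if "x \<in> rels (insert_link G r u t v)" "tgt (insert_link G r u t v) x = Some s" for x s
    using that fresh simple_rg_tgt[OF G, of x s] by (auto split: if_splits)
  show "card {x \<in> rels (insert_link G r u t v). tgt (insert_link G r u t v) x = Some s} = 1"
    if "s \<in> rels (insert_link G r u t v)" "tgt (insert_link G r u t v) s = None" for s
  proof (cases "s = t")
    case True
    then have "{x \<in> rels (insert_link G r u t v). tgt (insert_link G r u t v) x = Some s} = {r}"
      using fresh tgt_fresh by auto
    then show ?thesis
      by simp
  next
    case False
    with that fresh have s: "s \<in> rels G" "tgt G s = None"
      by (auto split: if_splits)
    then have "{x \<in> rels (insert_link G r u t v). tgt (insert_link G r u t v) x = Some s} =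
        {x \<in> rels G. tgt G x = Some s}"
      using fresh False by auto
    then show ?thesis
      using simple_rg_sink_card[OF G s] by simp
  qed
qed

lemma CPG_insert_link:
  assumes G: "simple_rg P G" and fresh: "r \<notin> rels G" "t \<notin> rels G" "r \<noteq> t"
  shows "CPG (insert_link G r u t v) = CPG G + {#(u, v)#}"
proof -
  let ?N = "{x \<in> rels G. tgt G x \<noteq> None}" and ?H = "insert_link G r u t v"
  let ?e = "\<lambda>H x. (own H x, own H (the (tgt H x)))"
  have nonsinks: "{x \<in> rels ?H. tgt ?H x \<noteq> None} = insert r ?N"
    using fresh by auto
  have "finite ?N" "r \<notin> ?N"
    using simple_rg_finite[OF G] fresh by auto
  have "?e ?H x = ?e G x" if x: "x \<in> ?N" for x
  proof -
    obtain s where s: "x \<in> rels G" "tgt G x = Some s"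
      using x by auto
    then have "s \<in> rels G"
      using simple_rg_tgt[OF G] by blast
    then show ?thesis
      using s fresh by auto
  qed
  then have "image_mset (?e ?H) (mset_set ?N) = image_mset (?e G) (mset_set ?N)"
    using \<open>finite ?N\<close> by (intro image_mset_cong) simp
  moreover have "?e ?H r = (u, v)"
    using fresh by simp
  ultimately show ?thesis
    using \<open>finite ?N\<close> \<open>r \<notin> ?N\<close> unfolding CPG_def nonsinks by simp
qed

section \<open>Removing, reversing and adding links by IFR steps\<close>

lemma enqueue_simps [simp]:
  "rels (enqueue G r m) = rels G" "own (enqueue G r m) = own G" "tgt (enqueue G r m) = tgt G"
  "buf (enqueue G r m) = (buf G)(r := buf G r + {#m#})"
  by (simp_all add: enqueue_def)

lemma add_relay_simps [simp]:
  "rels (add_relay G n u c) = insert n (rels G)" "own (add_relay G n u c) = (own G)(n := u)"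
  "tgt (add_relay G n u c) = (tgt G)(n := c)" "buf (add_relay G n u c) = (buf G)(n := {#})"
  by (simp_all add: add_relay_def)

lemma delete_relay_simps [simp]:
  "rels (delete_relay G r) = rels G - {r}" "own (delete_relay G r) = own G"
  "tgt (delete_relay G r) = tgt G"
  "buf (delete_relay G r) =
     (case tgt G r of None \<Rightarrow> buf G | Some t \<Rightarrow> (buf G)(t := buf G t + buf G r))"
  by (simp_all add: delete_relay_def split: option.split)

lemma incoming_eq_0I:
  assumes "\<And>x. x \<in> rels G \<Longrightarrow> tgt G x \<noteq> Some r" "\<And>x. x \<in> rels G \<Longrightarrow> r \<notin># buf G x"
  shows "incoming G r = 0"
proof -
  have no_connection: "{x \<in> rels G. tgt G x = Some r} = {}"
    using assms(1) by blast
  have no_message: "(\<Sum>x\<in>rels G. count (buf G x) r) = 0"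
    using assms(2) by (intro sum.neutral) (simp add: count_eq_zero_iff)
  show ?thesis
    unfolding incoming_def no_connection no_message by simp
qed

lemma has_relay_sink:
  "r \<in> rels G \<Longrightarrow> tgt G r = None \<Longrightarrow> has_relay G (own G r) r (own G r)"
  unfolding has_relay_def sink_process_def by (blast intro: reaches_sink.sink)

lemma has_relay_step:
  "r \<in> rels G \<Longrightarrow> tgt G r = Some s \<Longrightarrow> has_relay G u s v \<Longrightarrow> has_relay G (own G r) r v"
  unfolding has_relay_def sink_process_def by (blast intro: reaches_sink.step)

lemma remove_link_reachable:
  assumes G: "simple_rg P G" and r: "r \<in> rels G" "tgt G r = Some t"
    and s: "s \<in> rels G" "s \<notin> {r, t}" "own G s = own G r"
    and s': "s' \<in> rels G" "s' \<notin> {r, t}" "own G s' = own G t"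
  shows "\<exists>G'. (ifr_step P)\<^sup>*\<^sup>* G G' \<and> G' \<simeq> remove_link G r t"
proof -
  have t: "t \<in> rels G" "tgt G t = None" "r \<noteq> t"
    using simple_rg_tgt[OF G r] r(2) by auto
  note buf = simple_rg_buf[OF G]
  define G1 where "G1 = delete_relay (enqueue G r s) r"
  have "incoming G r = 0"
  proof (rule incoming_eq_0I)
    show "tgt G x \<noteq> Some r" if "x \<in> rels G" for x
      using simple_rg_tgt[OF G that] r(2) by auto
    show "r \<notin># buf G x" if "x \<in> rels G" for x
      using buf[OF that] by simp
  qed
  then have step1: "ifr_step P G G1"
    unfolding G1_def using r s by (intro relay_reversal[where u = "own G r"]) auto
  have G1: "rels G1 = rels G - {r}" "own G1 = own G" "tgt G1 = tgt G"
    "buf G1 = (buf G)(r := {#s#}, t := {#s#})"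
    using r t buf by (auto simp: G1_def)
  define G2 where "G2 = delete_relay (enqueue G1 t s') t"
  have "incoming G1 t = 0"
    using simple_rg_tgt_unique[OF G _ r(1) _ r(2)] s buf by (intro incoming_eq_0I) (auto simp: G1)
  then have step2: "ifr_step P G1 G2"
    unfolding G2_def using t s' by (intro relay_reversal[where u = "own G t"]) (auto simp: G1)
  have "G2 \<simeq> remove_link G r t"
    using G1 t by (auto simp: G2_def rstate_equiv_def)
  with step1 step2 show ?thesis
    by (meson converse_rtranclp_into_rtranclp r_into_rtranclp)
qed

lemma reverse_link_reachable:
  assumes G: "simple_rg P G" and r: "r \<in> rels G" "tgt G r = Some t"
    and fresh: "n \<notin> rels G" "n' \<notin> rels G" "n \<noteq> n'"
  shows "\<exists>G'. (ifr_step P)\<^sup>*\<^sup>* G G' \<and>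
    G' \<simeq> insert_link (remove_link G r t) n' (own G t) n (own G r)"
proof -
  have t: "t \<in> rels G" "tgt G t = None" "r \<noteq> t"
    using simple_rg_tgt[OF G r] r(2) by auto
  have distinct: "n \<noteq> r" "n \<noteq> t" "n' \<noteq> r" "n' \<noteq> t"
    using fresh r(1) t(1) by auto
  note buf = simple_rg_buf[OF G]
  define G1 where "G1 = add_relay G n (own G r) None"
  have step1: "ifr_step P G G1"
    unfolding G1_def using simple_rg_own[OF G r(1)] fresh(1) by (rule create_sink)
  have "incoming G1 r = 0"
  proof (rule incoming_eq_0I)
    show "tgt G1 x \<noteq> Some r" if "x \<in> rels G1" for x
      using that simple_rg_tgt[OF G, of x r] r(2) by (auto simp: G1_def)
    show "r \<notin># buf G1 x" if "x \<in> rels G1" for x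
      using that buf by (auto simp: G1_def)
  qed
  moreover define G2 where "G2 = delete_relay (enqueue G1 r n) r"
  ultimately have step2: "ifr_step P G1 G2"
    unfolding G2_def using r distinct by (intro relay_reversal[where u = "own G r"]) (auto simp: G1_def)
  have G2: "rels G2 = insert n (rels G) - {r}" "own G2 = (own G)(n := own G r)"
    "tgt G2 = (tgt G)(n := None)" "buf G2 t = {#n#}" "buf G2 n = {#}"
    "\<And>x. x \<in> rels G - {r, t} \<Longrightarrow> buf G2 x = {#}"
    using r t distinct buf by (auto simp: G2_def G1_def)
  define G3 where
    "G3 = add_relay (G2\<lparr>buf := (buf G2)(t := buf G2 t - {#n#})\<rparr>) n' (own G2 t) (Some n)"
  have step3: "ifr_step P G2 G3"
    unfolding G3_def by (rule receive) (use G2 t distinct fresh in auto)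
  have G3: "rels G3 = insert n' (insert n (rels G) - {r})" "own G3 = (own G)(n := own G r, n' := own G t)"
    "tgt G3 = (tgt G)(n := None, n' := Some n)" "\<And>x. x \<in> rels G3 \<Longrightarrow> buf G3 x = {#}"
    using G2 distinct fresh by (auto simp: G3_def)
  have "incoming G3 t = 0"
  proof (rule incoming_eq_0I)
    show "tgt G3 x \<noteq> Some t" if "x \<in> rels G3" for x
      using that simple_rg_tgt_unique[OF G _ r(1) _ r(2)] distinct by (auto simp: G3)
    show "t \<notin># buf G3 x" if "x \<in> rels G3" for x
      using G3(4)[OF that] by simp
  qed
  moreover define G4 where "G4 = delete_relay (enqueue G3 t n') t"
  ultimately have step4: "ifr_step P G3 G4"
    unfolding G4_def using t distinct fresh by (intro relay_reversal[where u = "own G t"]) (auto simp: G3)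
  have "G4 \<simeq> insert_link (remove_link G r t) n' (own G t) n (own G r)"
    using G3 t distinct fresh buf by (auto simp: G4_def rstate_equiv_def)
  with step1 step2 step3 step4 show ?thesis
    by (meson converse_rtranclp_into_rtranclp r_into_rtranclp)
qed

lemma link_from_indirect_relay_reachable:
  assumes b: "b \<in> rels H" "tgt H b = Some r" "\<And>z. z \<in> rels H \<Longrightarrow> tgt H z \<noteq> Some b"
    and r: "r \<in> rels H" "tgt H r = Some t" and t: "t \<in> rels H" "tgt H t = None"
    and "own H b \<in> P" and buf: "\<And>z. z \<in> rels H \<Longrightarrow> buf H z = {#}"
    and fresh: "x \<notin> rels H" "y \<notin> rels H" "x \<noteq> y"
  shows "\<exists>H'. (ifr_step P)\<^sup>*\<^sup>* H H' \<and>
    H' \<simeq> insert_link (delete_relay H b) x (own H t) y (own H b)"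
proof -
  have distinct: "b \<noteq> r" "b \<noteq> t" "r \<noteq> t"
    using b r t by auto
  define H1 where "H1 = add_relay H y (own H b) None"
  have step1: "ifr_step P H H1"
    unfolding H1_def using \<open>own H b \<in> P\<close> fresh(2) by (rule create_sink)
  have "incoming H1 b = 0"
    using b(1,3) buf fresh by (intro incoming_eq_0I) (auto simp: H1_def)
  moreover define H2 where "H2 = delete_relay (enqueue H1 b y) b"
  ultimately have step2: "ifr_step P H1 H2"
    unfolding H2_def using b fresh by (intro relay_reversal[where u = "own H b"]) (auto simp: H1_def)
  have H2: "rels H2 = insert y (rels H) - {b}" "own H2 = (own H)(y := own H b)"
    "tgt H2 = (tgt H)(y := None)"
    "\<And>z. z \<in> rels H2 \<Longrightarrow> buf H2 z = (if z = r then {#y#} else {#})"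
    using b r buf fresh by (auto simp: H2_def H1_def)
  define H3 where
    "H3 = H2\<lparr>buf := (buf H2)(r := buf H2 r - {#y#}, t := buf H2 t + {#y#})\<rparr>"
  have step3: "ifr_step P H2 H3"
    unfolding H3_def by (rule forward) (use H2 r distinct fresh in auto)
  define H4 where
    "H4 = add_relay (H3\<lparr>buf := (buf H3)(t := buf H3 t - {#y#})\<rparr>) x (own H3 t) (Some y)"
  have step4: "ifr_step P H3 H4"
    unfolding H4_def by (rule receive) (use H2 t distinct fresh in \<open>auto simp: H3_def\<close>)
  have H4: "rels H4 = insert x (insert y (rels H) - {b})"
    "own H4 = (own H)(y := own H b, x := own H t)" "tgt H4 = (tgt H)(y := None, x := Some y)"
    using H2 t fresh by (auto simp: H4_def H3_def)
  have H4_buf: "buf H4 z = {#}" if "z \<in> rels H4" for z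
  proof -
    have "z = x \<or> z \<in> rels H2"
      using that by (simp add: H4_def H3_def)
    moreover have "r \<in> rels H2" "t \<in> rels H2"
      using H2(1) r t distinct by auto
    ultimately show ?thesis
      using H2(4) distinct by (auto simp: H4_def H3_def)
  qed
  have "H4 \<simeq> insert_link (delete_relay H b) x (own H t) y (own H b)"
    using H4 H4_buf b r buf fresh by (auto simp: rstate_equiv_def)
  with step1 step2 step3 step4 show ?thesis
    by (meson converse_rtranclp_into_rtranclp r_into_rtranclp)
qed

lemma insert_link_reachable:
  assumes G: "simple_rg P G"
    and r1: "r1 \<in> rels G" "tgt G r1 = Some t1" and r2: "r2 \<in> rels G" "tgt G r2 = Some t2"
    and owner: "own G r1 = own G r2"
    and fresh: "b \<notin> rels G" "x \<notin> rels G" "y \<notin> rels G" "b \<noteq> x" "b \<noteq> y" "x \<noteq> y"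
  shows "\<exists>G'. (ifr_step P)\<^sup>*\<^sup>* G G' \<and> G' \<simeq> insert_link G x (own G t1) y (own G t2)"
proof -
  have t1: "t1 \<in> rels G" "tgt G t1 = None" and t2: "t2 \<in> rels G" "tgt G t2 = None"
    using simple_rg_tgt[OF G r1] simple_rg_tgt[OF G r2] by auto
  have distinct: "r1 \<noteq> t1" "r2 \<noteq> t2" "r1 \<noteq> t2" "r2 \<noteq> t1"
    using r1 r2 t1 t2 by auto
  note buf = simple_rg_buf[OF G]
  define G1 where "G1 = enqueue G r2 r1"
  have step1: "ifr_step P G G1"
    unfolding G1_def using has_relay_step[OF r2 has_relay_sink[OF t2]]
    by (rule relay_introduction) (use has_relay_step[OF r1 has_relay_sink[OF t1]] owner in simp)
  define G2 where
    "G2 = G1\<lparr>buf := (buf G1)(r2 := buf G1 r2 - {#r1#}, t2 := buf G1 t2 + {#r1#})\<rparr>"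
  have step2: "ifr_step P G1 G2"
    unfolding G2_def by (rule forward) (use r2 in \<open>simp_all add: G1_def\<close>)
  define G3 where
    "G3 = add_relay (G2\<lparr>buf := (buf G2)(t2 := buf G2 t2 - {#r1#})\<rparr>) b (own G2 t2) (Some r1)"
  have step3: "ifr_step P G2 G3"
    unfolding G3_def by (rule receive) (use t2 distinct fresh in \<open>simp_all add: G2_def G1_def\<close>)
  have G3: "rels G3 = insert b (rels G)" "own G3 = (own G)(b := own G t2)"
    "tgt G3 = (tgt G)(b := Some r1)" "\<And>z. z \<in> rels G3 \<Longrightarrow> buf G3 z = {#}"
    using buf distinct fresh by (auto simp: G3_def G2_def G1_def)
  have "\<exists>G'. (ifr_step P)\<^sup>*\<^sup>* G3 G' \<and>
      G' \<simeq> insert_link (delete_relay G3 b) x (own G3 t1) y (own G3 b)"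
  proof (rule link_from_indirect_relay_reachable[where r = r1])
    show "tgt G3 z \<noteq> Some b" if "z \<in> rels G3" for z
      using that simple_rg_tgt[OF G, of z b] r1(1) fresh by (auto simp: G3)
  qed (use G3 r1 t1 fresh simple_rg_own[OF G t2(1)] in auto)
  then obtain G' where steps: "(ifr_step P)\<^sup>*\<^sup>* G3 G'"
    and G': "G' \<simeq> insert_link (delete_relay G3 b) x (own G3 t1) y (own G3 b)"
    by blast
  have "G' \<simeq> insert_link G x (own G t1) y (own G t2)"
    using G' G3 t1 fresh buf by (auto simp: rstate_equiv_def)
  with step1 step2 step3 steps show ?thesis
    by (meson converse_rtranclp_into_rtranclp)
qed

section \<open>Emulation of the process rules\<close>

lemma CPG_memE:
  assumes G: "simple_rg P G" and "(u, v) \<in># CPG G"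
  obtains r t where "r \<in> rels G" "tgt G r = Some t" "own G r = u" "own G t = v"
proof -
  obtain r where "r \<in> rels G" "tgt G r \<noteq> None" "(own G r, own G (the (tgt G r))) = (u, v)"
    using assms(2) simple_rg_finite[OF G] by (auto simp: CPG_def)
  then show ?thesis
    using that by auto
qed

lemma CPG_count_ge_2E:
  assumes G: "simple_rg P G" and "count (CPG G) (u, v) \<ge> 2"
  obtains r t r' t' where "r \<in> rels G" "tgt G r = Some t" "own G r = u" "own G t = v"
    "r' \<in> rels G" "tgt G r' = Some t'" "own G r' = u" "own G t' = v" "r' \<noteq> r"
proof -
  have "(u, v) \<in># CPG G"
    using assms(2) by (simp add: Suc_le_eq flip: count_greater_zero_iff)
  then obtain r t where r: "r \<in> rels G" "tgt G r = Some t" "own G r = u" "own G t = v"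
    using CPG_memE[OF G] by blast
  have "(u, v) \<in># CPG (remove_link G r t)"
    using assms(2) r by (simp add: CPG_remove_link[OF G r(1,2)] flip: count_greater_zero_iff)
  then obtain r' t' where "r' \<in> rels (remove_link G r t)" "tgt (remove_link G r t) r' = Some t'"
      "own (remove_link G r t) r' = u" "own (remove_link G r t) t' = v"
    using CPG_memE[OF simple_rg_remove_link[OF G r(1,2)]] by blast
  then show ?thesis
    using that r by auto
qed

lemma fresh_relay_names:
  assumes "finite (R :: nat set)"
  obtains a b c where "a \<notin> R" "b \<notin> R" "c \<notin> R" "a \<noteq> b" "a \<noteq> c" "b \<noteq> c"
proof -
  obtain k where "\<forall>x \<in> R. x < k"
    using assms finite_nat_set_iff_bounded by blast
  then show ?thesis
    using that[of k "k + 1" "k + 2"] by force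
qed

lemma reachable_simple_rg_equiv:
  assumes "(ifr_step P)\<^sup>*\<^sup>* G G'" "G' \<simeq> H" "simple_rg P H"
  shows "\<exists>G'. (ifr_step P)\<^sup>*\<^sup>* G G' \<and> simple_rg P G' \<and> CPG G' = CPG H"
  using assms simple_rg_equiv CPG_equiv by blast

lemma emulate_introduction:
  assumes G: "simple_rg P G" and "proc_step Introduction (CPG G) M'"
  shows "\<exists>G'. (ifr_step P)\<^sup>*\<^sup>* G G' \<and> simple_rg P G' \<and> CPG G' = M'"
proof -
  obtain u v w where "(u, v) \<in># CPG G" "(u, w) \<in># CPG G" and M': "M' = CPG G + {#(v, w)#}"
    using assms(2) by auto
  then obtain r1 t1 r2 t2 where
    r1: "r1 \<in> rels G" "tgt G r1 = Some t1" "own G r1 = u" "own G t1 = v" and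
    r2: "r2 \<in> rels G" "tgt G r2 = Some t2" "own G r2 = u" "own G t2 = w"
    using CPG_memE[OF G] by metis
  obtain b x y where fresh: "b \<notin> rels G" "x \<notin> rels G" "y \<notin> rels G" "b \<noteq> x" "b \<noteq> y" "x \<noteq> y"
    using fresh_relay_names[OF simple_rg_finite[OF G]] by blast
  obtain G' where "(ifr_step P)\<^sup>*\<^sup>* G G'" "G' \<simeq> insert_link G x v y w"
    using insert_link_reachable[OF G r1(1,2) r2(1,2) _ fresh] r1 r2 by auto
  moreover have "simple_rg P (insert_link G x v y w)"
    using simple_rg_insert_link[OF G] fresh simple_rg_tgt[OF G] simple_rg_own[OF G] r1 r2 by metis
  ultimately show ?thesis
    using reachable_simple_rg_equiv CPG_insert_link[OF G] fresh M' by metis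
qed

lemma emulate_delegation:
  assumes G: "simple_rg P G" and "proc_step Delegation (CPG G) M'"
  shows "\<exists>G'. (ifr_step P)\<^sup>*\<^sup>* G G' \<and> simple_rg P G' \<and> CPG G' = M'"
proof -
  obtain u v w where "(u, v) \<in># CPG G" and uw: "(u, w) \<in># CPG G" and "v \<noteq> w"
    and M': "M' = CPG G - {#(u, w)#} + {#(v, w)#}"
    using assms(2) by auto
  then obtain r1 t1 r2 t2 where
    r1: "r1 \<in> rels G" "tgt G r1 = Some t1" "own G r1 = u" "own G t1 = v" and
    r2: "r2 \<in> rels G" "tgt G r2 = Some t2" "own G r2 = u" "own G t2 = w"
    using CPG_memE[OF G] by metis
  have distinct: "r1 \<noteq> r2" "r1 \<noteq> t2"
    using r1 r2 simple_rg_tgt[OF G r2(1,2)] \<open>v \<noteq> w\<close> by auto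
  obtain b x y where fresh: "b \<notin> rels G" "x \<notin> rels G" "y \<notin> rels G" "b \<noteq> x" "b \<noteq> y" "x \<noteq> y"
    using fresh_relay_names[OF simple_rg_finite[OF G]] by blast
  let ?H = "insert_link G x v y w"
  obtain G1 where steps1: "(ifr_step P)\<^sup>*\<^sup>* G G1" and G1: "G1 \<simeq> ?H"
    using insert_link_reachable[OF G r1(1,2) r2(1,2) _ fresh] r1 r2 by auto
  have H: "simple_rg P ?H"
    using simple_rg_insert_link[OF G] fresh simple_rg_tgt[OF G] simple_rg_own[OF G] r1 r2 by metis
  then have simple1: "simple_rg P G1"
    using G1 simple_rg_equiv by blast
  have links1: "r2 \<in> rels G1" "tgt G1 r2 = Some t2" "r1 \<in> rels G1" "y \<in> rels G1"
    "own G1 r1 = u" "own G1 r2 = u" "own G1 t2 = w" "own G1 y = w"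
    using G1 r1 r2 fresh simple_rg_tgt[OF G r2(1,2)] by (auto simp: rstate_equiv_def)
  \<comment> \<open>r1 and the new sink y supply the further relays of u and w that the removal needs\<close>
  obtain G2 where "(ifr_step P)\<^sup>*\<^sup>* G1 G2" "G2 \<simeq> remove_link G1 r2 t2"
    using remove_link_reachable[OF simple1 links1(1,2), of r1 y] links1 distinct fresh r2(1)
      simple_rg_tgt[OF G r2(1,2)] by auto
  moreover have "CPG (remove_link G1 r2 t2) = M'"
    using CPG_remove_link[OF simple1 links1(1,2)] CPG_equiv[OF H G1] CPG_insert_link[OF G] fresh
      links1 M' uw by (simp add: diff_union_single_conv)
  ultimately show ?thesis
    using reachable_simple_rg_equiv[OF rtranclp_trans[OF steps1]]
      simple_rg_remove_link[OF simple1 links1(1,2)] by metis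
qed

lemma emulate_fusion:
  assumes G: "simple_rg P G" and "proc_step Fusion (CPG G) M'"
  shows "\<exists>G'. (ifr_step P)\<^sup>*\<^sup>* G G' \<and> simple_rg P G' \<and> CPG G' = M'"
proof -
  obtain u v where "count (CPG G) (u, v) \<ge> 2" and M': "M' = CPG G - {#(u, v)#}"
    using assms(2) by auto
  then obtain r t r' t' where r: "r \<in> rels G" "tgt G r = Some t" "own G r = u" "own G t = v"
    and r': "r' \<in> rels G" "tgt G r' = Some t'" "own G r' = u" "own G t' = v" "r' \<noteq> r"
    using CPG_count_ge_2E[OF G] by metis
  have t: "t \<in> rels G" "tgt G t = None" and "tgt G t' = None"
    using simple_rg_tgt[OF G r(1,2)] simple_rg_tgt[OF G r'(1,2)] by auto
  moreover have "t \<noteq> t'"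
    using simple_rg_tgt_unique[OF G r(1) r'(1)] r(2) r'(2,5) by auto
  ultimately have "r \<notin> {r', t'}" "t \<notin> {r', t'}"
    using r(2) r'(2,5) by auto
  \<comment> \<open>the parallel link r \<rightarrow> t supplies the further relays of u and v that the removal needs\<close>
  then obtain G' where "(ifr_step P)\<^sup>*\<^sup>* G G'" "G' \<simeq> remove_link G r' t'"
    using remove_link_reachable[OF G r'(1,2), of r t] r t r' by auto
  then show ?thesis
    using reachable_simple_rg_equiv simple_rg_remove_link[OF G r'(1,2)]
      CPG_remove_link[OF G r'(1,2)] r' M' by metis
qed

lemma emulate_reversal:
  assumes G: "simple_rg P G" and "proc_step Reversal (CPG G) M'"
  shows "\<exists>G'. (ifr_step P)\<^sup>*\<^sup>* G G' \<and> simple_rg P G' \<and> CPG G' = M'"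
proof -
  obtain u v where "(u, v) \<in># CPG G" and M': "M' = CPG G - {#(u, v)#} + {#(v, u)#}"
    using assms(2) by auto
  then obtain r t where r: "r \<in> rels G" "tgt G r = Some t" "own G r = u" "own G t = v"
    using CPG_memE[OF G] by metis
  obtain n n' where fresh: "n \<notin> rels G" "n' \<notin> rels G" "n \<noteq> n'"
    using fresh_relay_names[OF simple_rg_finite[OF G]] by metis
  let ?R = "remove_link G r t"
  have R: "simple_rg P ?R"
    by (rule simple_rg_remove_link[OF G r(1,2)])
  have "u \<in> P" "v \<in> P"
    using r simple_rg_own[OF G] simple_rg_tgt[OF G] by metis+
  then have "simple_rg P (insert_link ?R n' v n u)"
    using simple_rg_insert_link[OF R] fresh by simp
  moreover obtain G' where "(ifr_step P)\<^sup>*\<^sup>* G G'" "G' \<simeq> insert_link ?R n' v n u"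
    using reverse_link_reachable[OF G r(1,2) fresh] r by auto
  moreover have "CPG (insert_link ?R n' v n u) = M'"
    using CPG_insert_link[OF R] CPG_remove_link[OF G r(1,2)] fresh r M' by simp
  ultimately show ?thesis
    using reachable_simple_rg_equiv by metis
qed

theorem lemma1:
  fixes P :: "'p set" and G :: "'p rstate" and M' :: "('p \<times> 'p) multiset" and p :: prule
  assumes "simple_rg P G"
    and "proc_step p (CPG G) M'"
  shows "\<exists>G'. (ifr_step P)\<^sup>*\<^sup>* G G' \<and> simple_rg P G' \<and> CPG G' = M'"
  using assms emulate_introduction emulate_delegation emulate_fusion emulate_reversal
  by (cases p) blast+

end
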